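(* Assume (A1) and fix all parameters except $\omega$ (so $E=\mu\sigma(1-2b^2\beta)$ is fixed). Let $\Omega=\{\omega\in[0,1]:\ \text{conditions (C1)--(C4) hold}\}$. Then $\Omega$ is a (possibly empty) subinterval of $[0,1]$. Moreover each of the following occurs for suitable values of the fixed parameters satisfying (A1): $\Omega=\emptyset$ (unconditionally unstable); $\Omega=[0,1]$ (unconditionally stable); $\Omega=[0,\bar\omega)$ with $\bar\omega\in(0,1)$ (destabilizing); $\Omega=(\bar\omega,1]$ with $\bar\omega\in(0,1)$ (stabilizing); $\Omega=(\omega_a,\omega_b)$ with $0<\omega_a<\omega_b<1$ (mixed).
   Context: Parameters: $c\in(0,1)$, $\gamma>0$, $\omega\in[0,1]$, $h>0$, $d>0$, $\sigma>0$, $\mu>0$, $b>0$, $\beta>0$, and $E=\mu\sigma(1-2b^2\beta)$. Assumption (A1): $1-c-hd>0$. Conditions (C1)--(C4) are: (C1) $E>0$; (C2) $(2-E)(1+c+2\gamma)-\omega^2dhE>0$; (C3) $1-c+cE+\omega^2dhE+\gamma c-E\gamma-E\gamma c+E^2\gamma-E^2\gamma^2+E\gamma^2-\gamma>0$; (C4) $2\gamma+c-cE-\gamma E-\omega^2dhE<3$. These are the conditions guaranteeing that all eigenvalues of the Jacobian matrix $\begin{pmatrix}c+\gamma&\omega h&-\gamma\\ \omega dE&1-E&0\\1&0&0\end{pmatrix}$ (the Jacobian, at the unbiased steady state $S^*$, of the model map) lie in the open unit disk. *)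

theory Defs
  imports "HOL-Analysis.Analysis"
begin

definition E_of :: "real \<Rightarrow> real \<Rightarrow> real \<Rightarrow> real \<Rightarrow> real" where
  "E_of \<mu> \<sigma> b \<beta> = \<mu> * \<sigma> * (1 - 2 * b^2 * \<beta>)"

definition admissible ::
  "real \<Rightarrow> real \<Rightarrow> real \<Rightarrow> real \<Rightarrow> real \<Rightarrow> real \<Rightarrow> real \<Rightarrow> real \<Rightarrow> bool" where
  "admissible c \<gamma> h d \<sigma> \<mu> b \<beta> \<longleftrightarrow>
     0 < c \<and> c < 1 \<and> 0 < \<gamma> \<and> 0 < h \<and> 0 < d \<and> 0 < \<sigma> \<and> 0 < \<mu> \<and> 0 < b \<and> 0 < \<beta>
     \<and> 1 - c - h * d > 0"

definition C1 :: "real \<Rightarrow> bool" where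
  "C1 E \<longleftrightarrow> E > 0"

definition C2 :: "real \<Rightarrow> real \<Rightarrow> real \<Rightarrow> real \<Rightarrow> real \<Rightarrow> real \<Rightarrow> bool" where
  "C2 c \<gamma> \<omega> h d E \<longleftrightarrow> (2 - E) * (1 + c + 2 * \<gamma>) - \<omega>^2 * d * h * E > 0"

definition C3 :: "real \<Rightarrow> real \<Rightarrow> real \<Rightarrow> real \<Rightarrow> real \<Rightarrow> real \<Rightarrow> bool" where
  "C3 c \<gamma> \<omega> h d E \<longleftrightarrow>
     1 - c + c * E + \<omega>^2 * d * h * E + \<gamma> * c - E * \<gamma> - E * \<gamma> * c + E^2 * \<gamma>
       - E^2 * \<gamma>^2 + E * \<gamma>^2 - \<gamma> > 0"

definition C4 :: "real \<Rightarrow> real \<Rightarrow> real \<Rightarrow> real \<Rightarrow> real \<Rightarrow> real \<Rightarrow> bool" where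
  "C4 c \<gamma> \<omega> h d E \<longleftrightarrow> 2 * \<gamma> + c - c * E - \<gamma> * E - \<omega>^2 * d * h * E < 3"

definition Omega ::
  "real \<Rightarrow> real \<Rightarrow> real \<Rightarrow> real \<Rightarrow> real \<Rightarrow> real \<Rightarrow> real \<Rightarrow> real \<Rightarrow> real set" where
  "Omega c \<gamma> h d \<sigma> \<mu> b \<beta> =
     {\<omega> \<in> {0..1}. let E = E_of \<mu> \<sigma> b \<beta> in
        C1 E \<and> C2 c \<gamma> \<omega> h d E \<and> C3 c \<gamma> \<omega> h d E \<and> C4 c \<gamma> \<omega> h d E}"

end

theory Submission
  imports Defs
begin

text \<open>For \<open>E > 0\<close> and \<open>d h > 0\<close>, conditions (C2)--(C4) are linear in \<open>\<omega>\<^sup>2\<close> with positive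
  coefficient \<open>d h E\<close>, so together they confine \<open>\<omega>\<^sup>2\<close> to an open window \<open>(L, U)\<close>; since
  \<open>\<omega> \<mapsto> \<omega>\<^sup>2\<close> is increasing on \<open>[0,1]\<close>, \<open>\<Omega>\<close> is \<open>[0,1] \<inter> (\<surd>L, \<surd>U)\<close>, an interval
  (and \<open>\<Omega> = {}\<close> when \<open>E \<le> 0\<close>). The five
  regimes are realised by rational parameters placing \<open>L\<close> and \<open>U\<close> suitably relative
  to \<open>0\<close> and \<open>1\<close>.\<close>

definition omega_sq_upper :: "real \<Rightarrow> real \<Rightarrow> real \<Rightarrow> real \<Rightarrow> real \<Rightarrow> real" where
  "omega_sq_upper c \<gamma> h d E = (2 - E) * (1 + c + 2 * \<gamma>) / (d * h * E)"

definition omega_sq_lower :: "real \<Rightarrow> real \<Rightarrow> real \<Rightarrow> real \<Rightarrow> real \<Rightarrow> real" where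
  "omega_sq_lower c \<gamma> h d E =
     max (- (1 - c + c * E + \<gamma> * c - E * \<gamma> - E * \<gamma> * c + E^2 * \<gamma> - E^2 * \<gamma>^2
             + E * \<gamma>^2 - \<gamma>) / (d * h * E))
         ((2 * \<gamma> + c - c * E - \<gamma> * E - 3) / (d * h * E))"

text \<open>Isabelle's \<open>sqrt\<close> is odd, so \<open>sqrt L < 0\<close> for \<open>L < 0\<close>: no case split on signs is needed.\<close>
lemma less_power2_iff_sqrt_less:
  fixes w L :: real
  assumes "0 \<le> w"
  shows "L < w^2 \<longleftrightarrow> sqrt L < w"
  using assms by (metis abs_of_nonneg real_sqrt_abs real_sqrt_less_iff)

lemma power2_less_iff_less_sqrt:
  fixes w U :: real
  assumes "0 \<le> w"
  shows "w^2 < U \<longleftrightarrow> w < sqrt U"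
  using assms by (metis abs_of_nonneg real_sqrt_abs real_sqrt_less_iff)

lemma square_window_eq:
  "{w \<in> {0..1::real}. L < w^2 \<and> w^2 < U} = {0..1} \<inter> {sqrt L<..<sqrt U}"
  by (auto simp: less_power2_iff_sqrt_less power2_less_iff_less_sqrt)

lemma Omega_eq_square_window:
  assumes dh: "0 < d * h" and E: "0 < E_of \<mu> \<sigma> b \<beta>"
  shows "Omega c \<gamma> h d \<sigma> \<mu> b \<beta> =
    {0..1} \<inter> {sqrt (omega_sq_lower c \<gamma> h d (E_of \<mu> \<sigma> b \<beta>))<..<
                 sqrt (omega_sq_upper c \<gamma> h d (E_of \<mu> \<sigma> b \<beta>))}"
proof -
  define E where "E = E_of \<mu> \<sigma> b \<beta>"
  have K: "0 < d * h * E" using dh E by (simp add: E_def)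
  have "C2 c \<gamma> w h d E \<longleftrightarrow> w^2 < omega_sq_upper c \<gamma> h d E" for w
    unfolding C2_def omega_sq_upper_def pos_less_divide_eq[OF K] by (simp add: mult.assoc)
  moreover have "C3 c \<gamma> w h d E \<and> C4 c \<gamma> w h d E \<longleftrightarrow> omega_sq_lower c \<gamma> h d E < w^2" for w
    unfolding C3_def C4_def omega_sq_lower_def max_less_iff_conj pos_divide_less_eq[OF K]
    by (simp add: mult.assoc) linarith
  ultimately have "Omega c \<gamma> h d \<sigma> \<mu> b \<beta> =
      {w \<in> {0..1}. omega_sq_lower c \<gamma> h d E < w^2 \<and> w^2 < omega_sq_upper c \<gamma> h d E}"
    using E unfolding Omega_def Let_def C1_def E_def[symmetric] by auto
  then show ?thesis unfolding square_window_eq E_def .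
qed

lemma is_interval_Omega:
  assumes "admissible c \<gamma> h d \<sigma> \<mu> b \<beta>"
  shows "is_interval (Omega c \<gamma> h d \<sigma> \<mu> b \<beta>)"
proof (cases "0 < E_of \<mu> \<sigma> b \<beta>")
  case True
  moreover have "0 < d * h" using assms by (simp add: admissible_def)
  ultimately show ?thesis
    by (simp add: Omega_eq_square_window is_interval_Int is_interval_cc is_interval_oo)
next
  case False
  then have "Omega c \<gamma> h d \<sigma> \<mu> b \<beta> = {}" by (simp add: Omega_def C1_def)
  then show ?thesis by simp
qed

lemma E_of_example: "E_of (2 * E) 1 (1/2) 1 = E"
  by (simp add: E_of_def power2_eq_square)

lemma Omega_example:
  assumes "0 < d * h" "0 < E"
    and "omega_sq_lower c \<gamma> h d E = L" "omega_sq_upper c \<gamma> h d E = U"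
  shows "Omega c \<gamma> h d 1 (2 * E) (1/2) 1 = {0..1} \<inter> {sqrt L<..<sqrt U}"
  using Omega_eq_square_window[of d h "2 * E" 1 "1/2" 1] assms by (simp add: E_of_example)

lemma unit_interval_Int_greaterThanLessThan:
  fixes a b :: real
  shows "b \<le> 0 \<Longrightarrow> {0..1} \<inter> {a<..<b} = {}"
    and "a < 0 \<Longrightarrow> 1 < b \<Longrightarrow> {0..1} \<inter> {a<..<b} = {0..1}"
    and "a < 0 \<Longrightarrow> b \<le> 1 \<Longrightarrow> {0..1} \<inter> {a<..<b} = {0..<b}"
    and "0 \<le> a \<Longrightarrow> 1 < b \<Longrightarrow> {0..1} \<inter> {a<..<b} = {a<..1}"
    and "0 \<le> a \<Longrightarrow> b \<le> 1 \<Longrightarrow> {0..1} \<inter> {a<..<b} = {a<..<b}"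
  by auto

lemma Omega_unconditionally_unstable:
  "Omega (1/2) 1 (1/2) (1/2) 1 (2 * 3) (1/2) 1 = {}"
proof -
  have "Omega (1/2) 1 (1/2) (1/2) 1 (2 * 3) (1/2) 1 = {0..1} \<inter> {sqrt 0<..<sqrt (-14/3)}"
    by (rule Omega_example) (simp_all add: omega_sq_lower_def omega_sq_upper_def power2_eq_square)
  also have "\<dots> = {}"
    by (rule unit_interval_Int_greaterThanLessThan(1)) simp_all
  finally show ?thesis .
qed

lemma Omega_unconditionally_stable:
  "Omega (1/2) (1/2) (1/4) 1 1 (2 * (1/2)) (1/2) 1 = {0..1}"
proof -
  have "Omega (1/2) (1/2) (1/4) 1 1 (2 * (1/2)) (1/2) 1 = {0..1} \<inter> {sqrt (-5/2)<..<sqrt (30)}"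
    by (rule Omega_example) (simp_all add: omega_sq_lower_def omega_sq_upper_def power2_eq_square)
  also have "\<dots> = {0..1}"
    by (rule unit_interval_Int_greaterThanLessThan(2)) simp_all
  finally show ?thesis .
qed

lemma Omega_destabilizing:
  "Omega (1/2) (1/4) (8/19) 1 1 (2 * (19/10)) (1/2) 1 = {0..<sqrt (1/4)}"
proof -
  have "Omega (1/2) (1/4) (8/19) 1 1 (2 * (19/10)) (1/2) 1 = {0..1} \<inter> {sqrt (-2253/1280)<..<sqrt (1/4)}"
    by (rule Omega_example) (simp_all add: omega_sq_lower_def omega_sq_upper_def power2_eq_square)
  also have "\<dots> = {0..<sqrt (1/4)}"
    by (rule unit_interval_Int_greaterThanLessThan(3)) simp_all
  finally show ?thesis .
qed

lemma Omega_stabilizing: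
  "Omega (1/10) (5/4) (9/20) 1 1 (2 * (8/5)) (1/2) 1 = {sqrt (113/144)<..1}"
proof -
  have "Omega (1/10) (5/4) (9/20) 1 1 (2 * (8/5)) (1/2) 1 = {0..1} \<inter> {sqrt (113/144)<..<sqrt (2)}"
    by (rule Omega_example) (simp_all add: omega_sq_lower_def omega_sq_upper_def power2_eq_square)
  also have "\<dots> = {sqrt (113/144)<..1}"
    by (rule unit_interval_Int_greaterThanLessThan(4)) simp_all
  finally show ?thesis .
qed

lemma Omega_mixed:
  "Omega (1/20) (11/10) (171/200) 1 1 (2 * (8/5)) (1/2) 1 = {sqrt (1043/6840)<..<sqrt (325/342)}"
proof -
  have "Omega (1/20) (11/10) (171/200) 1 1 (2 * (8/5)) (1/2) 1 = {0..1} \<inter> {sqrt (1043/6840)<..<sqrt (325/342)}"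
    by (rule Omega_example) (simp_all add: omega_sq_lower_def omega_sq_upper_def power2_eq_square)
  also have "\<dots> = {sqrt (1043/6840)<..<sqrt (325/342)}"
    by (rule unit_interval_Int_greaterThanLessThan(5)) simp_all
  finally show ?thesis .
qed

theorem proposition6:
  shows "(\<forall>c \<gamma> h d \<sigma> \<mu> b \<beta>. admissible c \<gamma> h d \<sigma> \<mu> b \<beta> \<longrightarrow>
            is_interval (Omega c \<gamma> h d \<sigma> \<mu> b \<beta>))
   \<and> (\<exists>c \<gamma> h d \<sigma> \<mu> b \<beta>. admissible c \<gamma> h d \<sigma> \<mu> b \<beta> \<and>
            Omega c \<gamma> h d \<sigma> \<mu> b \<beta> = {})
   \<and> (\<exists>c \<gamma> h d \<sigma> \<mu> b \<beta>. admissible c \<gamma> h d \<sigma> \<mu> b \<beta> \<and>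
            Omega c \<gamma> h d \<sigma> \<mu> b \<beta> = {0..1})
   \<and> (\<exists>c \<gamma> h d \<sigma> \<mu> b \<beta> w. admissible c \<gamma> h d \<sigma> \<mu> b \<beta> \<and> 0 < w \<and> w < 1 \<and>
            Omega c \<gamma> h d \<sigma> \<mu> b \<beta> = {0..<w})
   \<and> (\<exists>c \<gamma> h d \<sigma> \<mu> b \<beta> w. admissible c \<gamma> h d \<sigma> \<mu> b \<beta> \<and> 0 < w \<and> w < 1 \<and>
            Omega c \<gamma> h d \<sigma> \<mu> b \<beta> = {w<..1})
   \<and> (\<exists>c \<gamma> h d \<sigma> \<mu> b \<beta> wa wb. admissible c \<gamma> h d \<sigma> \<mu> b \<beta> \<and>
            0 < wa \<and> wa < wb \<and> wb < 1 \<and>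
            Omega c \<gamma> h d \<sigma> \<mu> b \<beta> = {wa<..<wb})"
proof -
  have "admissible (1/2) 1 (1/2) (1/2) 1 (2 * 3) (1/2) 1"
    and "admissible (1/2) (1/2) (1/4) 1 1 (2 * (1/2)) (1/2) 1"
    and "admissible (1/2) (1/4) (8/19) 1 1 (2 * (19/10)) (1/2) 1"
    and "admissible (1/10) (5/4) (9/20) 1 1 (2 * (8/5)) (1/2) 1"
    and "admissible (1/20) (11/10) (171/200) 1 1 (2 * (8/5)) (1/2) 1"
    by (simp_all add: admissible_def)
  moreover have "0 < sqrt (1/4)" "sqrt (1/4) < 1" "0 < sqrt (113/144)" "sqrt (113/144) < 1"
    and "0 < sqrt (1043/6840)" "sqrt (1043/6840) < sqrt (325/342)" "sqrt (325/342) < 1"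
    by simp_all
  ultimately show ?thesis
    using is_interval_Omega Omega_unconditionally_unstable Omega_unconditionally_stable
      Omega_destabilizing Omega_stabilizing Omega_mixed
    by blast
qed

end
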